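(* Let $\varphi\in[0,\pi]$. Consider all post-selected linear optical implementations, using two dual-rail qubits on four signal modes, any finite number of auxiliary modes prepared in the vacuum, and photon-number-resolving detectors, of the two-qubit gate whose matrix in the computational basis $|00\rangle,|01\rangle,|10\rangle,|11\rangle$ is $U_\varphi=\mathrm{diag}(1,1,1,\mathrm{e}^{i\varphi})$. Here "implementation" means: the operator obtained from the network by restricting the input to the computational subspace, projecting the output of the signal modes onto the computational (dual-rail) subspace and projecting the auxiliary modes onto the vacuum equals $\sqrt{p_s}\,U_\varphi$ up to an overall phase, for some constant $p_s>0$ (the success probability, which is then the same for every input state). Then the maximal success probability over all such implementations is $$p_s(\varphi)=\left(1+2\left|\sin\frac{\varphi}{2}\right|+2^{3/2}\sin\frac{\pi-\varphi}{4}\sqrt{\left|\sin\frac{\varphi}{2}\right|}\right)^{-2}.$$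
   Context: Linear optics setting: a passive linear optical network on $m$ bosonic modes with creation operators $a_1^\dagger,\dots,a_m^\dagger$ is described by a unitary $m\times m$ matrix $V$, acting as $a_i^\dagger\mapsto\sum_{j} V_{j,i}a_j^\dagger$. This induces a unitary on Fock space that maps the vacuum to itself and conserves total photon number. Dual-rail encoding: qubit $k\in\{1,2\}$ is carried by two signal modes $\mathfrak{0}_k,\mathfrak{1}_k$, and the logical state $|b\rangle_k$ ($b\in\{0,1\}$) means exactly one photon in mode $\mathfrak{b}_k$ and none in the other. The computational subspace of the four signal modes is spanned by the four states with exactly one photon per qubit pair of modes. Auxiliary modes start in the vacuum; no auxiliary photons are used. After the network, all modes are measured with photon-number-resolving detectors, and the run is accepted (post-selected) only if every auxiliary mode is found in the vacuum and the signal modes are in the computational subspace. *)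

theory Defs
  imports "HOL-Analysis.Analysis"
begin

text \<open>An m-mode passive linear optical network is a unitary m x m matrix V,
  represented as a function nat => nat => complex with indices below m,
  acting as a_i^dagger |-> sum_j V j i a_j^dagger.\<close>
definition unitary_mat :: "nat \<Rightarrow> (nat \<Rightarrow> nat \<Rightarrow> complex) \<Rightarrow> bool" where
  "unitary_mat m V \<longleftrightarrow>
     (\<forall>i<m. \<forall>k<m. (\<Sum>j<m. cnj (V j i) * V j k) = (if i = k then 1 else 0))"

text \<open>Signal modes: qubit 1 uses modes 0 (logical 0) and 1 (logical 1);
  qubit 2 uses modes 2 and 3. Modes 4..m-1 are auxiliary (vacuum).\<close>
definition mode1 :: "bool \<Rightarrow> nat" where "mode1 b = (if b then 1 else 0)"
definition mode2 :: "bool \<Rightarrow> nat" where "mode2 b = (if b then 3 else 2)"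

text \<open>Amplitude <1_k 1_l, vac_aux | U_V | 1_i 1_j, vac_aux> for distinct modes i,j
  and distinct k,l: the permanent of the 2x2 submatrix of V. This is the entry
  of the post-selected operator from input |b1 b2> to output |c1 c2>.\<close>
definition postsel_amp :: "(nat \<Rightarrow> nat \<Rightarrow> complex) \<Rightarrow> bool \<Rightarrow> bool \<Rightarrow> bool \<Rightarrow> bool \<Rightarrow> complex" where
  "postsel_amp V c1 c2 b1 b2 =
     V (mode1 c1) (mode1 b1) * V (mode2 c2) (mode2 b2)
   + V (mode2 c2) (mode1 b1) * V (mode1 c1) (mode2 b2)"

definition cphase_entry :: "real \<Rightarrow> bool \<Rightarrow> bool \<Rightarrow> bool \<Rightarrow> bool \<Rightarrow> complex" where
  "cphase_entry \<phi> c1 c2 b1 b2 =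
     (if c1 = b1 \<and> c2 = b2 then (if b1 \<and> b2 then exp (\<i> * complex_of_real \<phi>) else 1) else 0)"

definition implements_cphase :: "nat \<Rightarrow> (nat \<Rightarrow> nat \<Rightarrow> complex) \<Rightarrow> real \<Rightarrow> real \<Rightarrow> bool" where
  "implements_cphase m V \<phi> p \<longleftrightarrow>
     4 \<le> m \<and> unitary_mat m V \<and> p > 0 \<and>
     (\<exists>c. cmod c = 1 \<and>
        (\<forall>c1 c2 b1 b2. postsel_amp V c1 c2 b1 b2
            = c * complex_of_real (sqrt p) * cphase_entry \<phi> c1 c2 b1 b2))"

end

theory Submission
  imports Defs
begin

text \<open>Post-selection only sees the permanents of the 2 x 2 submatrices of V on the signal modes.
  Matching them with diag(1, 1, 1, w) forces the blocks that flip a qubit to vanish, and then for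
  some input basis state the amplitude splits into a direct term \<alpha> with cmod \<alpha> = sqrt p and a
  crossed term \<beta> with cnj \<alpha> * \<beta> equal to p z or p (cnj z), where z = w - 1. Every 2 x 2 submatrix
  of a unitary is a contraction, which gives
  cmod \<alpha> + cmod \<beta> + sqrt (2 (cmod (cnj \<alpha> \<beta>) + Re (cnj \<alpha> \<beta>))) \<le> 1,
  that is sqrt p * cmod (1 + csqrt z)^2 \<le> 1. A seven-mode network attains equality, and for
  w = exp (i \<phi>) with 0 \<le> \<phi> \<le> pi the quantity cmod (1 + csqrt z)^2 is the bracket in the stated
  formula.\<close>

definition phase_gate :: "complex \<Rightarrow> bool \<Rightarrow> bool \<Rightarrow> bool \<Rightarrow> bool \<Rightarrow> complex" where
  "phase_gate w c1 c2 b1 b2 = (if c1 = b1 \<and> c2 = b2 then if b1 \<and> b2 then w else 1 else 0)"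

lemma cphase_entry_eq_phase_gate: "cphase_entry \<phi> = phase_gate (exp (\<i> * complex_of_real \<phi>))"
  by (simp add: fun_eq_iff cphase_entry_def phase_gate_def)

lemma rank_one_neq_scalar_identity:
  fixes u x :: "bool \<Rightarrow> 'a::idom"
  assumes "s \<noteq> 0" and "\<And>i j. u i * x j = (if i = j then s else 0)"
  shows False
proof -
  have "u True \<noteq> 0" "x False \<noteq> 0"
    using assms(1) assms(2)[of True True] assms(2)[of False False] by auto
  moreover have "u True * x False = 0" using assms(2)[of True False] by simp
  ultimately show False by simp
qed

lemma rank_one_perturbation_coeff_eq_0:
  fixes S :: "bool \<Rightarrow> bool \<Rightarrow> 'a::field"
  assumes "s \<noteq> 0"
    and direct: "\<And>i j. a * S i j + u i * v j = (if i = j then s else 0)"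
    and crossed: "\<And>i j. b * S i j + u i * w j = 0"
  shows "b = 0"
proof (rule ccontr)
  assume "b \<noteq> 0"
  \<comment> \<open>then S is a rank-one matrix with column u, hence so is s times the identity\<close>
  then have "S i j = - (u i * w j) / b" for i j
    using crossed[of i j] by (simp add: eq_neg_iff_add_eq_0 field_simps)
  then have "u i * (v j - a * w j / b) = (if i = j then s else 0)" for i j
    using direct[of i j] by (simp add: algebra_simps)
  then show False by (rule rank_one_neq_scalar_identity[OF assms(1)])
qed

text \<open>With P and S the blocks of the network inside the two dual-rail pairs and R, Q the blocks
  between them, a post-selected amplitude is the permanent P c1 b1 * S c2 b2 + R c2 b1 * Q c1 b2:
  a direct term, in which each photon stays with its qubit, plus a crossed term, in which the
  two photons exchange qubits.\<close>

lemma phase_gate_amplitudes_offdiag_eq_0: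
  fixes P S R Q :: "bool \<Rightarrow> bool \<Rightarrow> complex"
  assumes "s \<noteq> 0"
    and amp: "\<And>c1 b1 c2 b2. P c1 b1 * S c2 b2 + R c2 b1 * Q c1 b2 = s * phase_gate w c1 c2 b1 b2"
    and "c \<noteq> b"
  shows "P c b = 0" and "S c b = 0"
proof -
  have "P True False = 0"
    by (rule rank_one_perturbation_coeff_eq_0[of s "P False False" S "\<lambda>i. R i False" "\<lambda>j. Q False j"
          _ "\<lambda>j. Q True j"]) (use assms amp in \<open>simp_all add: phase_gate_def\<close>)
  moreover have "P False True = 0"
    by (rule rank_one_perturbation_coeff_eq_0[of s "P False False" "\<lambda>i j. S j i" "\<lambda>i. Q False i"
          "\<lambda>j. R j False" _ "\<lambda>j. R j True"]) (use assms amp in \<open>simp_all add: phase_gate_def ac_simps\<close>)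
  moreover have "S True False = 0"
    by (rule rank_one_perturbation_coeff_eq_0[of s "S False False" P "\<lambda>i. Q i False" "\<lambda>j. R False j"
          _ "\<lambda>j. R True j"]) (use assms amp in \<open>simp_all add: phase_gate_def ac_simps\<close>)
  moreover have "S False True = 0"
    by (rule rank_one_perturbation_coeff_eq_0[of s "S False False" "\<lambda>i j. P j i" "\<lambda>i. R False i"
          "\<lambda>j. Q j False" _ "\<lambda>j. Q j True"]) (use assms amp in \<open>simp_all add: phase_gate_def ac_simps\<close>)
  ultimately show "P c b = 0" "S c b = 0" using \<open>c \<noteq> b\<close> by (cases c; simp)+
qed

lemma unimodular_direct_term:
  assumes "cmod e = 1" and "\<alpha> = s * e" and "\<alpha> + \<beta> = s * d"
  shows "cmod \<alpha> = cmod s" and "cnj \<alpha> * \<beta> = (cmod s)\<^sup>2 * (cnj e * d - 1)"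
proof -
  have ee: "cnj e * e = 1"
    using assms(1) by (simp add: complex_norm_square[symmetric] mult.commute)
  show "cmod \<alpha> = cmod s" using assms(1,2) by (simp add: norm_mult)
  have \<beta>: "\<beta> = s * d - s * e" using assms(2,3) by (metis add_diff_cancel_left')
  have "cnj \<alpha> * \<beta> = (cnj s * s) * (cnj e * d - cnj e * e)"
    unfolding \<beta> assms(2) by (simp add: algebra_simps)
  also have "cnj s * s = (cmod s)\<^sup>2"
    by (simp add: mult.commute flip: complex_norm_square)
  finally show "cnj \<alpha> * \<beta> = (cmod s)\<^sup>2 * (cnj e * d - 1)"
    by (simp add: ee)
qed

lemma lone_crossed_term:
  fixes \<alpha> \<beta> :: "bool \<Rightarrow> bool \<Rightarrow> complex" and w :: complex
  assumes s: "s \<noteq> 0" and w: "cmod w = 1"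
    and split: "\<And>c1 c2. \<alpha> c1 c2 + \<beta> c1 c2 = s * (if c1 \<and> c2 then w else 1)"
    and lone: "\<And>c1 c2. (c1, c2) \<noteq> (b1, b2) \<Longrightarrow> \<beta> c1 c2 = 0"
    and mult: "\<alpha> False False * \<alpha> True True = \<alpha> False True * \<alpha> True False"
  shows "cmod (\<alpha> b1 b2) = cmod s \<and>
    cnj (\<alpha> b1 b2) * \<beta> b1 b2 \<in> {(cmod s)\<^sup>2 * (w - 1), (cmod s)\<^sup>2 * cnj (w - 1)}"
proof -
  have direct: "\<alpha> c1 c2 = s * (if c1 \<and> c2 then w else 1)" if "(c1, c2) \<noteq> (b1, b2)" for c1 c2
    using split[of c1 c2] lone[OF that] by simp
  have ww: "w * cnj w = 1"
    using w by (simp add: complex_norm_square[symmetric])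
  \<comment> \<open>the relation mult recovers the remaining direct term from the other three\<close>
  obtain e where e: "cmod e = 1" "\<alpha> b1 b2 = s * e" and
    ed: "cnj e * (if b1 \<and> b2 then w else 1) \<in> {w, cnj w}"
  proof (cases b1; cases b2)
    assume "b1" "b2"
    then have "\<alpha> True True * s = s * s"
      using mult direct[of False False] direct[of False True] direct[of True False] by simp
    then show thesis using that[of 1] s \<open>b1\<close> \<open>b2\<close> by (simp add: mult.commute)
  next
    assume "b1" "\<not> b2"
    then have "s * (s * w) = \<alpha> True False * s"
      using mult direct[of False False] direct[of False True] direct[of True True] by simp
    then show thesis using that[of w] s w \<open>b1\<close> \<open>\<not> b2\<close> by (simp add: mult.commute)
  next
    assume "\<not> b1" "b2"
    then have "s * (s * w) = \<alpha> False True * s"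
      using mult direct[of False False] direct[of True False] direct[of True True] by simp
    then show thesis using that[of w] s w \<open>\<not> b1\<close> \<open>b2\<close> by (simp add: mult.commute)
  next
    assume "\<not> b1" "\<not> b2"
    then have "\<alpha> False False * (s * w) * cnj w = s * s * cnj w"
      using mult direct[of False True] direct[of True False] direct[of True True] by simp
    then have "\<alpha> False False = s * cnj w" using s by (simp add: mult.assoc ww)
    then show thesis using that[of "cnj w"] w \<open>\<not> b1\<close> \<open>\<not> b2\<close> by simp
  qed
  show ?thesis
    using unimodular_direct_term[OF e split] ed by auto
qed

lemma phase_gate_amplitudes_lone_crossed_term:
  fixes P S R Q :: "bool \<Rightarrow> bool \<Rightarrow> complex" and w :: complex
  assumes s: "s \<noteq> 0" and w: "cmod w = 1"
    and amp: "\<And>c1 b1 c2 b2. P c1 b1 * S c2 b2 + R c2 b1 * Q c1 b2 = s * phase_gate w c1 c2 b1 b2"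
  obtains b1 b2 where "cmod (P b1 b1 * S b2 b2) = cmod s"
    and "cnj (P b1 b1 * S b2 b2) * (R b2 b1 * Q b1 b2) \<in> {(cmod s)\<^sup>2 * (w - 1), (cmod s)\<^sup>2 * cnj (w - 1)}"
proof -
  define \<alpha> where "\<alpha> b1 b2 = P b1 b1 * S b2 b2" for b1 b2
  define \<beta> where "\<beta> b1 b2 = R b2 b1 * Q b1 b2" for b1 b2
  have split: "\<alpha> c1 c2 + \<beta> c1 c2 = s * (if c1 \<and> c2 then w else 1)" for c1 c2
    using amp[of c1 c1 c2 c2] by (simp add: \<alpha>_def \<beta>_def phase_gate_def)
  have crossed: "R c2 b1 * Q c1 b2 = 0" if "(c1, c2) \<noteq> (b1, b2)" for c1 c2 b1 b2
  proof -
    have "P c1 b1 * S c2 b2 = 0"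
      using that phase_gate_amplitudes_offdiag_eq_0[OF s amp] by (cases "c1 = b1") auto
    moreover have "phase_gate w c1 c2 b1 b2 = 0"
      using that by (auto simp: phase_gate_def)
    ultimately show ?thesis using amp[of c1 b1 c2 b2] by (metis add_0 mult_zero_right)
  qed
  have \<beta>_orth: "\<beta> b1 b2 * \<beta> c1 c2 = 0" if "(b1, b2) \<noteq> (c1, c2)" for b1 b2 c1 c2
  proof -
    have "\<beta> b1 b2 * \<beta> c1 c2 = (R b2 b1 * Q c1 c2) * (R c2 c1 * Q b1 b2)"
      by (simp add: \<beta>_def ac_simps)
    then show ?thesis using crossed that by auto
  qed
  obtain b1 b2 where lone: "\<And>c1 c2. (c1, c2) \<noteq> (b1, b2) \<Longrightarrow> \<beta> c1 c2 = 0"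
  proof (cases "\<exists>b1 b2. \<beta> b1 b2 \<noteq> 0")
    case True
    then obtain b1 b2 where "\<beta> b1 b2 \<noteq> 0" by blast
    show thesis
    proof (rule that)
      fix c1 c2 assume "(c1, c2) \<noteq> (b1, b2)"
      then show "\<beta> c1 c2 = 0" using \<beta>_orth \<open>\<beta> b1 b2 \<noteq> 0\<close> by (metis mult_eq_0_iff)
    qed
  next
    case False
    then show thesis using that by blast
  qed
  have mult: "\<alpha> False False * \<alpha> True True = \<alpha> False True * \<alpha> True False"
    by (simp add: \<alpha>_def ac_simps)
  have "cmod (\<alpha> b1 b2) = cmod s \<and>
    cnj (\<alpha> b1 b2) * \<beta> b1 b2 \<in> {(cmod s)\<^sup>2 * (w - 1), (cmod s)\<^sup>2 * cnj (w - 1)}"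
    by (rule lone_crossed_term[OF s w split lone mult])
  then show thesis unfolding \<alpha>_def \<beta>_def using that by blast
qed

lemma cmod_add_power2: "(cmod (x + y))\<^sup>2 = (cmod x)\<^sup>2 + (cmod y)\<^sup>2 + 2 * Re (cnj x * y)"
  unfolding cmod_power2 by (simp add: power2_eq_square algebra_simps)

lemma unitary_two_columns_norm:
  assumes U: "unitary_mat m V" and k: "k < m" and l: "l < m" and "k \<noteq> l"
  shows "(\<Sum>n<m. (cmod (V n k * u + V n l * v))\<^sup>2) = (cmod u)\<^sup>2 + (cmod v)\<^sup>2"
proof -
  have col: "(\<Sum>n<m. cnj (V n i) * V n i') = (if i = i' then 1 else 0)"
    if "i \<in> {k, l}" "i' \<in> {k, l}" for i i'
    using U that k l unfolding unitary_mat_def by auto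
  have "(\<Sum>n<m. (V n k * u + V n l * v) * cnj (V n k * u + V n l * v))
     = u * cnj u * (\<Sum>n<m. cnj (V n k) * V n k) + u * cnj v * (\<Sum>n<m. cnj (V n l) * V n k)
       + v * cnj u * (\<Sum>n<m. cnj (V n k) * V n l) + v * cnj v * (\<Sum>n<m. cnj (V n l) * V n l)"
    by (simp add: sum_distrib_left sum.distrib algebra_simps)
  also have "\<dots> = u * cnj u + v * cnj v"
    using col \<open>k \<noteq> l\<close> by simp
  finally have "complex_of_real (\<Sum>n<m. (cmod (V n k * u + V n l * v))\<^sup>2)
      = complex_of_real ((cmod u)\<^sup>2 + (cmod v)\<^sup>2)"
    by (simp only: of_real_sum of_real_add complex_norm_square)
  then show ?thesis by (simp only: of_real_eq_iff)
qed

lemma unitary_two_rows_le: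
  assumes U: "unitary_mat m V" and "i < m" "j < m" "i \<noteq> j" "k < m" "l < m" "k \<noteq> l"
  shows "(cmod (V i k * u + V i l * v))\<^sup>2 + (cmod (V j k * u + V j l * v))\<^sup>2 \<le> (cmod u)\<^sup>2 + (cmod v)\<^sup>2"
proof -
  let ?f = "\<lambda>n. (cmod (V n k * u + V n l * v))\<^sup>2"
  have "?f i + ?f j = sum ?f {i, j}" using assms by simp
  also have "\<dots> \<le> sum ?f {..<m}" by (rule sum_mono2) (use assms in auto)
  also have "\<dots> = (cmod u)\<^sup>2 + (cmod v)\<^sup>2" using unitary_two_columns_norm assms by blast
  finally show ?thesis .
qed

lemma unitary_submatrix_bound:
  assumes "unitary_mat m V" and "i < m" "j < m" "i \<noteq> j" "k < m" "l < m" "k \<noteq> l"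
  defines "a \<equiv> V i k" and "q \<equiv> V i l" and "r \<equiv> V j k" and "b \<equiv> V j l"
  shows "((cmod a)\<^sup>2 + (cmod q)\<^sup>2 + (cmod r)\<^sup>2 + (cmod b)\<^sup>2) / 2 + cmod (cnj a * q + cnj r * b) \<le> 1"
proof -
  define z where "z = cnj a * q + cnj r * b"
  \<comment> \<open>test the contraction on the vector (1, e), with e rotating z onto the positive axis\<close>
  define e where "e = cis (- Arg z)"
  have "z * e = cmod z"
    by (metis e_def rcis_cmod_Arg rcis_def cis_mult add.right_neutral add_uminus_conv_diff
        cis_zero diff_self mult.assoc mult.right_neutral)
  moreover have "cnj a * (q * e) + cnj r * (b * e) = z * e"
    by (simp add: z_def algebra_simps)
  ultimately have cross: "Re (cnj a * (q * e)) + Re (cnj r * (b * e)) = cmod z"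
    by (metis plus_complex.sel(1) Re_complex_of_real)
  have "cmod e = 1" by (simp add: e_def)
  have "(cmod (a + q * e))\<^sup>2 + (cmod (r + b * e))\<^sup>2 \<le> (cmod 1)\<^sup>2 + (cmod e)\<^sup>2"
    using unitary_two_rows_le[OF assms(1-7), of 1 e] by (simp add: a_def q_def r_def b_def)
  then have "(cmod a)\<^sup>2 + (cmod q)\<^sup>2 + 2 * Re (cnj a * (q * e))
      + ((cmod r)\<^sup>2 + (cmod b)\<^sup>2 + 2 * Re (cnj r * (b * e))) \<le> 2"
    unfolding cmod_add_power2 norm_mult \<open>cmod e = 1\<close> by simp
  with cross show ?thesis unfolding z_def[symmetric] by argo
qed

lemma unitary_permanent_terms_bound:
  assumes "unitary_mat m V" and "i < m" "j < m" "i \<noteq> j" "k < m" "l < m" "k \<noteq> l"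
  defines "\<alpha> \<equiv> V i k * V j l" and "\<beta> \<equiv> V j k * V i l"
  shows "cmod \<alpha> + cmod \<beta> + sqrt (2 * (cmod (cnj \<alpha> * \<beta>) + Re (cnj \<alpha> * \<beta>))) \<le> 1"
proof -
  define a q r b where "a = V i k" and "q = V i l" and "r = V j k" and "b = V j l"
  define z where "z = cnj a * q + cnj r * b"
  have "2 * cmod \<alpha> \<le> (cmod a)\<^sup>2 + (cmod b)\<^sup>2"
    using sum_squares_bound[of "cmod a" "cmod b"] by (simp add: \<alpha>_def a_def b_def norm_mult)
  moreover have "2 * cmod \<beta> \<le> (cmod q)\<^sup>2 + (cmod r)\<^sup>2"
    using sum_squares_bound[of "cmod r" "cmod q"] by (simp add: \<beta>_def q_def r_def norm_mult)
  moreover have "sqrt (2 * (cmod (cnj \<alpha> * \<beta>) + Re (cnj \<alpha> * \<beta>))) \<le> cmod z"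
  proof (rule real_le_lsqrt)
    have "2 * cmod (cnj \<alpha> * \<beta>) \<le> (cmod (cnj a * q))\<^sup>2 + (cmod (cnj r * b))\<^sup>2"
      using sum_squares_bound[of "cmod (cnj a * q)" "cmod (cnj r * b)"]
      by (simp add: \<alpha>_def \<beta>_def a_def b_def q_def r_def norm_mult ac_simps)
    moreover have "cnj (cnj a * q) * (cnj r * b) = cnj (cnj \<alpha> * \<beta>)"
      by (simp add: \<alpha>_def \<beta>_def a_def b_def q_def r_def ac_simps)
    then have "Re (cnj (cnj a * q) * (cnj r * b)) = Re (cnj \<alpha> * \<beta>)"
      by simp
    ultimately show "2 * (cmod (cnj \<alpha> * \<beta>) + Re (cnj \<alpha> * \<beta>)) \<le> (cmod z)\<^sup>2"
      unfolding z_def cmod_add_power2 by argo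
  qed simp_all
  ultimately show ?thesis
    using unitary_submatrix_bound[OF assms(1-7)] unfolding z_def a_def q_def r_def b_def
    by argo
qed

lemma cmod_one_plus_csqrt_power2:
  "(cmod (1 + csqrt z))\<^sup>2 = 1 + cmod z + sqrt (2 * (cmod z + Re z))"
proof -
  have "sqrt (2 * (cmod z + Re z)) = sqrt (4 * ((cmod z + Re z) / 2))"
    by simp
  then have "2 * Re (csqrt z) = sqrt (2 * (cmod z + Re z))"
    by (subst (asm) real_sqrt_mult) simp
  then show ?thesis
    using cmod_add_power2[of 1 "csqrt z"] by simp
qed

lemma one_le_cmod_one_plus_csqrt: "1 \<le> cmod (1 + csqrt z)"
proof -
  have "1 \<le> Re (1 + csqrt z)" using Re_csqrt[of z] by simp
  then show ?thesis using complex_Re_le_cmod order_trans by blast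
qed

definition optimal_cphase_prob :: "complex \<Rightarrow> real" where
  "optimal_cphase_prob w = 1 / cmod (1 + csqrt (w - 1)) ^ 4"

lemma direct_crossed_terms_bound:
  fixes \<alpha> \<beta> z :: complex
  assumes bound: "cmod \<alpha> + cmod \<beta> + sqrt (2 * (cmod (cnj \<alpha> * \<beta>) + Re (cnj \<alpha> * \<beta>))) \<le> 1"
    and \<alpha>: "cmod \<alpha> = sqrt p" and \<alpha>\<beta>: "cnj \<alpha> * \<beta> \<in> {p * z, p * cnj z}" and p: "0 < p"
  shows "sqrt p * (cmod (1 + csqrt z))\<^sup>2 \<le> 1"
proof -
  obtain z' :: complex where \<alpha>\<beta>_eq: "cnj \<alpha> * \<beta> = p * z'" and "cmod z' = cmod z" "Re z' = Re z"
    using \<alpha>\<beta>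
  proof (elim insertE emptyE)
    assume "cnj \<alpha> * \<beta> = p * z" then show thesis by (rule that) simp_all
  next
    assume "cnj \<alpha> * \<beta> = p * cnj z" then show thesis by (rule that) simp_all
  qed
  then have \<alpha>\<beta>_norm: "cmod (cnj \<alpha> * \<beta>) = p * cmod z" and \<alpha>\<beta>_Re: "Re (cnj \<alpha> * \<beta>) = p * Re z"
    unfolding \<alpha>\<beta>_eq using p by (simp_all add: norm_mult)
  have "sqrt p * cmod \<beta> = sqrt p * (sqrt p * cmod z)"
    using \<alpha>\<beta>_norm \<alpha> p by (simp add: norm_mult)
  then have "cmod \<beta> = sqrt p * cmod z" using p by simp
  moreover have "sqrt (2 * (cmod (cnj \<alpha> * \<beta>) + Re (cnj \<alpha> * \<beta>))) = sqrt p * sqrt (2 * (cmod z + Re z))"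
    unfolding \<alpha>\<beta>_norm \<alpha>\<beta>_Re by (simp add: real_sqrt_mult[symmetric] algebra_simps)
  ultimately show ?thesis
    using bound \<alpha> unfolding cmod_one_plus_csqrt_power2 by (simp add: algebra_simps)
qed

lemma le_optimal_cphase_prob:
  assumes "0 \<le> p" and "sqrt p * (cmod (1 + csqrt (w - 1)))\<^sup>2 \<le> 1"
  shows "p \<le> optimal_cphase_prob w"
proof -
  have "0 < (cmod (1 + csqrt (w - 1)))\<^sup>2"
    using one_le_cmod_one_plus_csqrt by (meson less_le_trans zero_less_one zero_less_power)
  with assms(2) have "sqrt p \<le> 1 / (cmod (1 + csqrt (w - 1)))\<^sup>2"
    by (simp add: le_divide_eq mult.commute)
  then have "(sqrt p)\<^sup>2 \<le> (1 / (cmod (1 + csqrt (w - 1)))\<^sup>2)\<^sup>2"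
    by (rule power_mono) (use assms(1) in simp)
  then show ?thesis
    using assms(1) by (simp add: optimal_cphase_prob_def power_divide flip: power_mult)
qed

lemma implements_cphase_success_bound:
  assumes "implements_cphase m V \<phi> p"
  shows "sqrt p * (cmod (1 + csqrt (exp (\<i> * complex_of_real \<phi>) - 1)))\<^sup>2 \<le> 1"
proof -
  define w where "w = exp (\<i> * complex_of_real \<phi>)"
  obtain c where m: "4 \<le> m" and U: "unitary_mat m V" and p: "p > 0" and c: "cmod c = 1"
    and amp: "\<And>c1 c2 b1 b2. postsel_amp V c1 c2 b1 b2 = c * sqrt p * phase_gate w c1 c2 b1 b2"
    using assms unfolding implements_cphase_def cphase_entry_eq_phase_gate w_def by blast
  have s: "c * sqrt p \<noteq> 0" "cmod (c * sqrt p) = sqrt p"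
    using c p by (auto simp: norm_mult)
  obtain b1 b2 where \<alpha>: "cmod (V (mode1 b1) (mode1 b1) * V (mode2 b2) (mode2 b2)) = sqrt p"
    and \<alpha>\<beta>: "cnj (V (mode1 b1) (mode1 b1) * V (mode2 b2) (mode2 b2))
                * (V (mode2 b2) (mode1 b1) * V (mode1 b1) (mode2 b2)) \<in> {p * (w - 1), p * cnj (w - 1)}"
    using phase_gate_amplitudes_lone_crossed_term[OF s(1), of w "\<lambda>c b. V (mode1 c) (mode1 b)"
        "\<lambda>c b. V (mode2 c) (mode2 b)" "\<lambda>c b. V (mode2 c) (mode1 b)" "\<lambda>c b. V (mode1 c) (mode2 b)"]
      amp p s(2)
    by (auto simp: w_def postsel_amp_def)
  define \<alpha> \<beta> where "\<alpha> = V (mode1 b1) (mode1 b1) * V (mode2 b2) (mode2 b2)"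
    and "\<beta> = V (mode2 b2) (mode1 b1) * V (mode1 b1) (mode2 b2)"
  have "cmod \<alpha> + cmod \<beta> + sqrt (2 * (cmod (cnj \<alpha> * \<beta>) + Re (cnj \<alpha> * \<beta>))) \<le> 1"
    unfolding \<alpha>_def \<beta>_def
    by (rule unitary_permanent_terms_bound[OF U]) (use m in \<open>auto simp: mode1_def mode2_def\<close>)
  from direct_crossed_terms_bound[OF this \<alpha>[folded \<alpha>_def] \<alpha>\<beta>[folded \<alpha>_def \<beta>_def] p]
  show ?thesis unfolding w_def .
qed

lemma implements_cphase_le_optimal:
  assumes "implements_cphase m V \<phi> p"
  shows "p \<le> optimal_cphase_prob (exp (\<i> * complex_of_real \<phi>))"
  using assms implements_cphase_success_bound[OF assms]
  by (intro le_optimal_cphase_prob) (simp_all add: implements_cphase_def)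

text \<open>The logical-zero modes 0 and 2 are attenuated by beam splitters of transmissivity t into
  the vacuum modes 4 and 5; the logical-one modes 1 and 3 interfere with the vacuum mode 6 in a
  three-mode network whose amplitude t^2 + y^2 on the input 11 carries the phase.\<close>

definition cphase_network :: "real \<Rightarrow> real \<Rightarrow> real \<Rightarrow> complex \<Rightarrow> nat \<Rightarrow> nat \<Rightarrow> complex" where
  "cphase_network t \<tau> g y i j =
     [[t, 0, 0, 0, \<tau>, 0, 0],
      [0, t, 0, y, 0, 0, g],
      [0, 0, t, 0, 0, \<tau>, 0],
      [0, y, 0, t, 0, 0, -g],
      [\<tau>, 0, 0, 0, -t, 0, 0],
      [0, 0, \<tau>, 0, 0, -t, 0],
      [0, g, 0, -g, 0, 0, -(t - cnj y)]] ! i ! j"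

lemma unitary_cphase_network:
  assumes "t\<^sup>2 + \<tau>\<^sup>2 = 1" and "cmod (t + y) = 1" and "g\<^sup>2 = 2 * t * Re y"
  shows "unitary_mat 7 (cphase_network t \<tau> g y)"
proof -
  have ty: "(t + y) * (t + cnj y) = 1"
    using assms(2) complex_norm_square[of "t + y"] by simp
  have beam_splitter: "complex_of_real t * t + complex_of_real \<tau> * \<tau> = 1"
    using assms(1) by (simp flip: of_real_mult of_real_add add: power2_eq_square)
  have col13: "complex_of_real t * (y + cnj y) = complex_of_real g * g"
    using assms(3) by (simp flip: of_real_mult add: complex_add_cnj power2_eq_square mult.assoc)
  have col1: "complex_of_real t * t + cnj y * y + complex_of_real g * g = 1"
    unfolding col13[symmetric] ty[symmetric] by (simp add: algebra_simps)
  have col6: "2 * (complex_of_real g * g) + (t - y) * (t - cnj y) = 1"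
    unfolding col13[symmetric] ty[symmetric] by (simp add: algebra_simps)
  show ?thesis
    unfolding unitary_mat_def
    apply (simp add: eval_nat_numeral lessThan_Suc less_Suc_eq)
    apply (simp add: cphase_network_def)
    using beam_splitter col1 col13 col6 by (auto simp: algebra_simps)
qed

lemma postsel_amp_cphase_network:
  assumes "y\<^sup>2 = t\<^sup>2 * (w - 1)"
  shows "postsel_amp (cphase_network t \<tau> g y) c1 c2 b1 b2 = t\<^sup>2 * phase_gate w c1 c2 b1 b2"
  using assms
  by (cases c1; cases c2; cases b1; cases b2)
    (simp_all add: postsel_amp_def mode1_def mode2_def cphase_network_def phase_gate_def
      power2_eq_square algebra_simps)

lemma implements_cphase_optimal:
  "\<exists>V. implements_cphase 7 V \<phi> (optimal_cphase_prob (exp (\<i> * complex_of_real \<phi>)))"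
proof -
  define w where "w = exp (\<i> * complex_of_real \<phi>)"
  define r where "r = csqrt (w - 1)"
  define t where "t = 1 / cmod (1 + r)"
  define y where "y = t * r"
  \<comment> \<open>y^2 = t^2 (w - 1) gives the phase and cmod (t + y) = 1 gives unitarity\<close>
  have r1: "1 \<le> cmod (1 + r)"
    unfolding r_def by (rule one_le_cmod_one_plus_csqrt)
  then have r0: "0 < cmod (1 + r)" by linarith
  with r1 have t: "0 < t" "t \<le> 1"
    unfolding t_def by (simp_all add: divide_le_eq)
  have ty: "complex_of_real t + y = t * (1 + r)"
    by (simp add: y_def algebra_simps)
  have "t\<^sup>2 + (sqrt (1 - t\<^sup>2))\<^sup>2 = 1"
    using t by (simp add: power_le_one)
  moreover have "cmod (t + y) = 1"
    using r0 unfolding ty by (simp add: norm_mult norm_divide t_def)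
  moreover have "(sqrt (2 * t * Re y))\<^sup>2 = 2 * t * Re y"
    using t Re_csqrt[of "w - 1", folded r_def] by (simp add: y_def)
  ultimately have U: "unitary_mat 7 (cphase_network t (sqrt (1 - t\<^sup>2)) (sqrt (2 * t * Re y)) y)"
    by (rule unitary_cphase_network)
  have "y\<^sup>2 = t\<^sup>2 * (w - 1)"
    by (simp add: y_def r_def power_mult_distrib)
  note amp = postsel_amp_cphase_network[OF this]
  have opt: "optimal_cphase_prob w = (t\<^sup>2)\<^sup>2"
    by (simp add: optimal_cphase_prob_def t_def r_def power_divide flip: power_mult)
  then have "sqrt (optimal_cphase_prob w) = t\<^sup>2"
    by (simp only: real_sqrt_abs abs_power2)
  moreover have "optimal_cphase_prob w > 0"
    using opt t by simp
  ultimately have "implements_cphase 7 (cphase_network t (sqrt (1 - t\<^sup>2)) (sqrt (2 * t * Re y)) y)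
      \<phi> (optimal_cphase_prob w)"
    unfolding implements_cphase_def cphase_entry_eq_phase_gate w_def[symmetric]
    using U amp by (intro conjI exI[of _ 1]) auto
  then show ?thesis unfolding w_def by blast
qed

lemma Re_exp_i_minus_one: "Re (exp (\<i> * complex_of_real \<phi>) - 1) = - 2 * (sin (\<phi> / 2))\<^sup>2"
  using cos_double_sin[of "\<phi> / 2"] by (simp flip: cis_conv_exp)

lemma cmod_exp_i_minus_one: "cmod (exp (\<i> * complex_of_real \<phi>) - 1) = 2 * \<bar>sin (\<phi> / 2)\<bar>"
proof -
  have "(cmod (exp (\<i> * complex_of_real \<phi>) - 1))\<^sup>2 = (cos \<phi> - 1)\<^sup>2 + (sin \<phi>)\<^sup>2"
    by (simp add: cmod_power2 flip: cis_conv_exp)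
  also have "\<dots> = 2 * (1 - cos \<phi>)"
    by (simp add: power2_eq_square algebra_simps sin_squared_eq)
  also have "\<dots> = (2 * sin (\<phi> / 2))\<^sup>2"
    using cos_double_sin[of "\<phi> / 2"] by (simp add: power2_eq_square)
  finally show ?thesis
    by (metis abs_mult abs_numeral norm_ge_zero power2_eq_imp_eq power2_abs abs_ge_zero
        mult_nonneg_nonneg zero_le_numeral)
qed

lemma sin_quarter_eq:
  assumes "0 \<le> \<phi>" and "\<phi> \<le> pi"
  shows "sin ((pi - \<phi>) / 4) = sqrt ((1 - sin (\<phi> / 2)) / 2)"
proof -
  have "0 \<le> sin ((pi - \<phi>) / 4)" using assms by (intro sin_ge_zero) auto
  moreover have "cos (2 * ((pi - \<phi>) / 4)) = sin (\<phi> / 2)"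
  proof -
    have "2 * ((pi - \<phi>) / 4) = pi / 2 - \<phi> / 2" by simp
    then show ?thesis by (simp only:) (simp add: cos_diff)
  qed
  then have "(sin ((pi - \<phi>) / 4))\<^sup>2 = (1 - sin (\<phi> / 2)) / 2"
    using cos_double_sin[of "(pi - \<phi>) / 4"] by simp
  ultimately show ?thesis by (metis real_sqrt_abs abs_of_nonneg)
qed

lemma optimal_cphase_prob_exp_i:
  assumes "0 \<le> \<phi>" and "\<phi> \<le> pi"
  shows "optimal_cphase_prob (exp (\<i> * complex_of_real \<phi>)) = 1 / (1 + 2 * \<bar>sin (\<phi> / 2)\<bar>
                 + 2 powr (3/2) * sin ((pi - \<phi>) / 4) * sqrt \<bar>sin (\<phi> / 2)\<bar>) ^ 2"
proof -
  define \<sigma> where "\<sigma> = sin (\<phi> / 2)"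
  have \<sigma>: "0 \<le> \<sigma>" "\<sigma> \<le> 1"
    using assms by (auto simp: \<sigma>_def intro: sin_ge_zero)
  have "2 * (2 * \<sigma> + - 2 * \<sigma>\<^sup>2) = 4 * \<sigma> * (1 - \<sigma>)"
    by (simp add: algebra_simps power2_eq_square)
  also have "\<dots> = (2 * sqrt \<sigma> * sqrt (1 - \<sigma>))\<^sup>2"
    using \<sigma> by (simp add: power_mult_distrib)
  finally have K: "(cmod (1 + csqrt (exp (\<i> * complex_of_real \<phi>) - 1)))\<^sup>2
      = 1 + 2 * \<sigma> + 2 * sqrt \<sigma> * sqrt (1 - \<sigma>)"
    using \<sigma> unfolding cmod_one_plus_csqrt_power2 cmod_exp_i_minus_one Re_exp_i_minus_one
    by (simp add: \<sigma>_def[symmetric])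
  have "(2::real) powr (3/2) = 2 powr (1 + 1/2)" by simp
  also have "\<dots> = 2 * sqrt 2" by (simp only: powr_add powr_half_sqrt) simp
  finally have P: "2 powr (3/2) * sin ((pi - \<phi>) / 4) * sqrt \<sigma> = 2 * sqrt \<sigma> * sqrt (1 - \<sigma>)"
    using \<sigma> unfolding sin_quarter_eq[OF assms] \<sigma>_def[symmetric]
    by (simp add: real_sqrt_divide)
  have "optimal_cphase_prob (exp (\<i> * complex_of_real \<phi>))
      = 1 / ((cmod (1 + csqrt (exp (\<i> * complex_of_real \<phi>) - 1)))\<^sup>2)\<^sup>2"
    by (simp add: optimal_cphase_prob_def flip: power_mult)
  also have "\<dots> = 1 / (1 + 2 * \<bar>\<sigma>\<bar> + 2 powr (3/2) * sin ((pi - \<phi>) / 4) * sqrt \<bar>\<sigma>\<bar>) ^ 2"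
    by (simp only: K P abs_of_nonneg[OF \<sigma>(1)])
  finally show ?thesis unfolding \<sigma>_def .
qed

theorem mainTheorem1:
  fixes \<phi> :: real
  assumes "0 \<le> \<phi>" and "\<phi> \<le> pi"
  defines "p_opt \<equiv> 1 / (1 + 2 * \<bar>sin (\<phi> / 2)\<bar>
                 + 2 powr (3/2) * sin ((pi - \<phi>) / 4) * sqrt \<bar>sin (\<phi> / 2)\<bar>) ^ 2"
  shows "(\<exists>m V. implements_cphase m V \<phi> p_opt) \<and>
         (\<forall>m V p. implements_cphase m V \<phi> p \<longrightarrow> p \<le> p_opt)"
  using implements_cphase_optimal implements_cphase_le_optimal
  unfolding p_opt_def optimal_cphase_prob_exp_i[OF assms(1,2), symmetric] by blast

end
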